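(* Let $\mathbb A=(A_n)_{n\in\mathbb Z^+}$ be a sequence of invertible linear operators on $\mathbb R^d$ and $\mathcal S=\{\|\cdot\|_n;\ n\in\mathbb Z^+\}$ a sequence of norms such that there exist $K,a>0$ with $\|\mathcal A(m,n)x\|_m\le Ke^{a(m-n)}\|x\|_n$ and $\|\mathcal A(n,m)x\|_n\le Ke^{a(m-n)}\|x\|_m$ for all $m\ge n$, $x$. Let $\Sigma=\Sigma_{ED,\mathbb A,\mathcal S}$. Then $\Sigma$ is closed in $(0,\infty)$. Moreover, for every $r\in(0,\infty)\setminus\Sigma$ there is an open interval $I\ni r$ such that $S_r(n)=S_{r'}(n)$ for all $n\in\mathbb Z^+$ and all $r'\in I$.
   Context: $\mathbb Z^+=\{0,1,\dots\}$. $\mathcal A(m,n)=A_{m-1}\cdots A_n$ ($m>n$), $\mathrm{Id}$ ($m=n$), $A_m^{-1}\cdots A_{n-1}^{-1}$ ($m<n$). For $r>0$, $n\in\mathbb Z^+$: $S_r(n)=\{v\in\mathbb R^d:\ \sup_{m\ge n}r^{-(m-n)}\|\mathcal A(m,n)v\|_m<+\infty\}$. A sequence $(C_n)_{n\in\mathbb Z^+}$ with cocycle $\mathcal C$ admits a strong exponential dichotomy w.r.t. $\mathcal S$ if there exist $K>0$, $a\ge\lambda>0$ and projections $P_n$ with $C_nP_n=P_{n+1}C_n$ such that for $m\ge n$, $x$, $Q_m=\mathrm{Id}-P_m$: $\|\mathcal C(m,n)P_nx\|_m\le Ke^{-\lambda(m-n)}\|x\|_n$, $\|\mathcal C(n,m)Q_mx\|_n\le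 Ke^{-\lambda(m-n)}\|x\|_m$, $\|\mathcal C(m,n)x\|_m\le Ke^{a(m-n)}\|x\|_n$, $\|\mathcal C(n,m)x\|_n\le Ke^{a(m-n)}\|x\|_m$. $\Sigma_{ED,\mathbb A,\mathcal S}$: set of $\tau>0$ such that $(\tau^{-1}A_n)_{n\in\mathbb Z^+}$ does not admit a strong exponential dichotomy w.r.t. $\mathcal S$. *)

theory Defs
  imports "HOL-Analysis.Analysis"
begin

definition is_norm :: "(real^'d \<Rightarrow> real) \<Rightarrow> bool" where
  "is_norm N \<longleftrightarrow> (\<forall>x. 0 \<le> N x) \<and> (\<forall>x. N x = 0 \<longleftrightarrow> x = 0)
     \<and> (\<forall>c x. N (c *\<^sub>R x) = \<bar>c\<bar> * N x) \<and> (\<forall>x y. N (x + y) \<le> N x + N y)"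

fun cocycle_fwd :: "(nat \<Rightarrow> real^'d^'d) \<Rightarrow> nat \<Rightarrow> nat \<Rightarrow> real^'d^'d" where
  "cocycle_fwd A n 0 = mat 1"
| "cocycle_fwd A n (Suc k) = A (n + k) ** cocycle_fwd A n k"

definition cocycle :: "(nat \<Rightarrow> real^'d^'d) \<Rightarrow> nat \<Rightarrow> nat \<Rightarrow> real^'d^'d" where
  "cocycle A m n = (if n \<le> m then cocycle_fwd A n (m - n)
                    else matrix_inv (cocycle_fwd A m (n - m)))"

definition strong_ED :: "(nat \<Rightarrow> real^'d^'d) \<Rightarrow> (nat \<Rightarrow> real^'d \<Rightarrow> real) \<Rightarrow> bool" where
  "strong_ED C N \<longleftrightarrow> (\<exists>K a lam (P :: nat \<Rightarrow> real^'d^'d).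
      K > 0 \<and> lam > 0 \<and> a \<ge> lam \<and>
      (\<forall>n. P n ** P n = P n) \<and>
      (\<forall>n. C n ** P n = P (Suc n) ** C n) \<and>
      (\<forall>m n x. n \<le> m \<longrightarrow>
         N m (cocycle C m n *v (P n *v x)) \<le> K * exp (- lam * real (m - n)) * N n x \<and>
         N n (cocycle C n m *v ((mat 1 - P m) *v x)) \<le> K * exp (- lam * real (m - n)) * N m x \<and>
         N m (cocycle C m n *v x) \<le> K * exp (a * real (m - n)) * N n x \<and>
         N n (cocycle C n m *v x) \<le> K * exp (a * real (m - n)) * N m x))"

definition ED_spectrum :: "(nat \<Rightarrow> real^'d^'d) \<Rightarrow> (nat \<Rightarrow> real^'d \<Rightarrow> real) \<Rightarrow> real set" where
  "ED_spectrum A N = {\<tau>. \<tau> > 0 \<and> \<not> strong_ED (\<lambda>n. inverse \<tau> *\<^sub>R A n) N}"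

definition S_space :: "(nat \<Rightarrow> real^'d^'d) \<Rightarrow> (nat \<Rightarrow> real^'d \<Rightarrow> real) \<Rightarrow> real \<Rightarrow> nat \<Rightarrow> (real^'d) set" where
  "S_space A N r n = {v. bdd_above ((\<lambda>m. inverse r ^ (m - n) * N m (cocycle A m n *v v)) ` {n..})}"

end

theory Submission
  imports Defs
begin

text \<open>
  Rescaling a sequence by \<open>c > 0\<close> multiplies its forward cocycle by \<open>c\<^sup>m\<^sup>-\<^sup>n\<close> and its
  backward cocycle by \<open>c\<^sup>n\<^sup>-\<^sup>m\<close>. Hence if \<open>(\<tau>\<^sup>-\<^sup>1 A\<^sub>n)\<close> has a strong exponential dichotomy
  with rate \<open>\<lambda>\<close> and projections \<open>P\<^sub>n\<close>, then for \<open>\<bar>ln \<tau>' - ln \<tau>\<bar> < \<lambda>\<close> the sequence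
  \<open>(\<tau>'\<^sup>-\<^sup>1 A\<^sub>n) = (\<tau>/\<tau>') (\<tau>\<^sup>-\<^sup>1 A\<^sub>n)\<close> has one with the same projections and rate
  \<open>\<lambda> - \<bar>ln \<tau>' - ln \<tau>\<bar>\<close>, so the complement of the spectrum is open.
  Moreover \<open>S\<^sub>\<tau>(n)\<close> is the range of \<open>P\<^sub>n\<close>: stable vectors have bounded rescaled orbits,
  while a vector in the kernel of \<open>P\<^sub>n\<close> is recovered from its position at time \<open>n + k\<close> by
  the backward cocycle, which contracts by \<open>K e\<^sup>-\<^sup>\<lambda>\<^sup>k\<close>; if its orbit is bounded, it is zero.
  As the projections are the same for all \<open>\<tau>'\<close> near \<open>\<tau>\<close>, so is \<open>S\<^sub>\<tau>'(n)\<close>.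
\<close>

lemma matrix_inv_cancel:
  fixes M :: "'a::semiring_1^'n^'m"
  assumes "invertible M"
  shows "M ** matrix_inv M = mat 1" and "matrix_inv M ** M = mat 1"
  using someI_ex[OF assms[unfolded invertible_def]] unfolding matrix_inv_def by auto

lemma matrix_inv_eqI:
  fixes M :: "'a::semiring_1^'n^'n"
  assumes "M ** B = mat 1" and "B ** M = mat 1"
  shows "matrix_inv M = B"
proof -
  have "invertible M" using assms unfolding invertible_def by blast
  have "matrix_inv M = matrix_inv M ** (M ** B)" using assms by simp
  also have "\<dots> = (matrix_inv M ** M) ** B" by (simp add: matrix_mul_assoc)
  also have "\<dots> = B" using matrix_inv_cancel[OF \<open>invertible M\<close>] by simp
  finally show ?thesis .
qed

lemma matrix_inv_scaleR:
  fixes M :: "'a::real_algebra_1^'n^'n"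
  assumes "invertible M" and "c \<noteq> 0"
  shows "matrix_inv (c *\<^sub>R M) = inverse c *\<^sub>R matrix_inv M"
  by (rule matrix_inv_eqI)
    (use matrix_inv_cancel[OF assms(1)] assms(2) in
      \<open>simp_all add: matrix_scalar_ac scalar_matrix_assoc[symmetric]\<close>)

lemma invertible_cocycle_fwd:
  assumes "\<And>n. invertible (B n)"
  shows "invertible (cocycle_fwd B n k)"
proof (induction k)
  case 0
  then show ?case by (auto simp: invertible_def)
qed (simp add: assms invertible_mult)

lemma cocycle_fwd_scaleR:
  "cocycle_fwd (\<lambda>n. c *\<^sub>R B n) n k = c ^ k *\<^sub>R cocycle_fwd B n k"
  by (induction k) (simp_all add: matrix_scalar_ac scalar_matrix_assoc[symmetric])

lemma cocycle_scaleR_forward: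
  assumes "n \<le> m"
  shows "cocycle (\<lambda>n. c *\<^sub>R B n) m n = c ^ (m - n) *\<^sub>R cocycle B m n"
  using assms by (simp add: cocycle_def cocycle_fwd_scaleR)

lemma cocycle_scaleR_backward:
  assumes "n \<le> m" and "\<And>n. invertible (B n)" and "c \<noteq> 0"
  shows "cocycle (\<lambda>n. c *\<^sub>R B n) n m = inverse c ^ (m - n) *\<^sub>R cocycle B n m"
proof (cases "m = n")
  case False
  then show ?thesis
    using assms invertible_cocycle_fwd[OF assms(2)]
    by (simp add: cocycle_def cocycle_fwd_scaleR matrix_inv_scaleR power_inverse)
qed (simp add: cocycle_def)

lemma cocycle_backward_mult_forward:
  assumes "n \<le> m" and "\<And>n. invertible (B n)"
  shows "cocycle B n m ** cocycle B m n = mat 1"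
  using assms matrix_inv_cancel(2)[OF invertible_cocycle_fwd[of B n "m - n", OF assms(2)]]
  by (cases "m = n") (simp_all add: cocycle_def)

lemma cocycle_fwd_intertwines:
  assumes "\<And>n. B n ** P n = P (Suc n) ** B n"
  shows "cocycle_fwd B n k ** P n = P (n + k) ** cocycle_fwd B n k"
proof (induction k)
  case (Suc k)
  have "cocycle_fwd B n (Suc k) ** P n = B (n + k) ** (cocycle_fwd B n k ** P n)"
    by (simp add: matrix_mul_assoc)
  also have "\<dots> = (B (n + k) ** P (n + k)) ** cocycle_fwd B n k"
    using Suc by (simp add: matrix_mul_assoc)
  also have "\<dots> = P (n + Suc k) ** cocycle_fwd B n (Suc k)"
    using assms by (simp add: matrix_mul_assoc)
  finally show ?case .
qed simp

lemma cocycle_intertwines: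
  assumes "\<And>n. B n ** P n = P (Suc n) ** B n" and "n \<le> m"
  shows "cocycle B m n ** P n = P m ** cocycle B m n"
  using cocycle_fwd_intertwines[of B P n "m - n", OF assms(1)] assms(2)
  by (simp add: cocycle_def)

lemma is_norm_nonneg: "is_norm M \<Longrightarrow> 0 \<le> M x"
  unfolding is_norm_def by blast

lemma is_norm_eq_zero: "is_norm M \<Longrightarrow> M x = 0 \<longleftrightarrow> x = 0"
  unfolding is_norm_def by blast

lemma is_norm_scaleR: "is_norm M \<Longrightarrow> M (c *\<^sub>R x) = \<bar>c\<bar> * M x"
  unfolding is_norm_def by blast

lemma is_norm_diff_le:
  assumes "is_norm M"
  shows "M (x - y) \<le> M x + M y"
proof -
  have "M (x + (-1) *\<^sub>R y) \<le> M x + M ((-1) *\<^sub>R y)"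
    using assms unfolding is_norm_def by blast
  then show ?thesis using is_norm_scaleR[OF assms, of "-1" y] by simp
qed

lemma power_le_exp_abs_ln:
  fixes c :: real
  assumes "c > 0"
  shows "c ^ k \<le> exp (\<bar>ln c\<bar> * real k)"
proof -
  have "c ^ k = exp (ln c * real k)"
    using assms by (simp add: exp_of_nat_mult mult.commute)
  also have "\<dots> \<le> exp (\<bar>ln c\<bar> * real k)" by (simp add: mult_right_mono)
  finally show ?thesis .
qed

lemma cocycle_scaleR_forward_bound:
  assumes norm: "is_norm (N m)" and "n \<le> m" and "c > 0"
    and bound: "N m (cocycle B m n *v y) \<le> K * exp (b * real (m - n)) * R"
  shows "N m (cocycle (\<lambda>n. c *\<^sub>R B n) m n *v y) \<le> K * exp ((b + \<bar>ln c\<bar>) * real (m - n)) * R"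
proof -
  have "N m (cocycle (\<lambda>n. c *\<^sub>R B n) m n *v y) = c ^ (m - n) * N m (cocycle B m n *v y)"
    using assms by (simp add: cocycle_scaleR_forward is_norm_scaleR
        scaleR_matrix_vector_assoc[symmetric])
  also have "\<dots> \<le> exp (\<bar>ln c\<bar> * real (m - n)) * (K * exp (b * real (m - n)) * R)"
    by (rule mult_mono[OF power_le_exp_abs_ln[OF \<open>c > 0\<close>] bound])
      (simp_all add: is_norm_nonneg[OF norm])
  finally show ?thesis unfolding distrib_right exp_add by (simp add: ac_simps)
qed

lemma cocycle_scaleR_backward_bound:
  assumes norm: "is_norm (N n)" and "n \<le> m" and "c > 0" and "\<And>n. invertible (B n)"
    and bound: "N n (cocycle B n m *v y) \<le> K * exp (b * real (m - n)) * R"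
  shows "N n (cocycle (\<lambda>n. c *\<^sub>R B n) n m *v y) \<le> K * exp ((b + \<bar>ln c\<bar>) * real (m - n)) * R"
proof -
  have "N n (cocycle (\<lambda>n. c *\<^sub>R B n) n m *v y) = inverse c ^ (m - n) * N n (cocycle B n m *v y)"
    using assms by (simp add: cocycle_scaleR_backward is_norm_scaleR
        scaleR_matrix_vector_assoc[symmetric])
  also have "\<dots> \<le> exp (\<bar>ln c\<bar> * real (m - n)) * (K * exp (b * real (m - n)) * R)"
    using power_le_exp_abs_ln[of "inverse c" "m - n"] \<open>c > 0\<close>
    by (intro mult_mono[OF _ bound])
      (simp_all add: ln_inverse is_norm_nonneg[OF norm] del: of_nat_diff)
  finally show ?thesis unfolding distrib_right exp_add by (simp add: ac_simps)
qed

definition strong_ED_with ::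
    "(nat \<Rightarrow> real^'d^'d) \<Rightarrow> (nat \<Rightarrow> real^'d \<Rightarrow> real) \<Rightarrow> real \<Rightarrow> real \<Rightarrow> real
      \<Rightarrow> (nat \<Rightarrow> real^'d^'d) \<Rightarrow> bool" where
  "strong_ED_with C N K a lam P \<longleftrightarrow>
      K > 0 \<and> lam > 0 \<and> a \<ge> lam \<and>
      (\<forall>n. P n ** P n = P n) \<and>
      (\<forall>n. C n ** P n = P (Suc n) ** C n) \<and>
      (\<forall>m n x. n \<le> m \<longrightarrow>
         N m (cocycle C m n *v (P n *v x)) \<le> K * exp (- lam * real (m - n)) * N n x \<and>
         N n (cocycle C n m *v ((mat 1 - P m) *v x)) \<le> K * exp (- lam * real (m - n)) * N m x \<and>
         N m (cocycle C m n *v x) \<le> K * exp (a * real (m - n)) * N n x \<and>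
         N n (cocycle C n m *v x) \<le> K * exp (a * real (m - n)) * N m x)"

lemma strong_ED_iff_ex_strong_ED_with:
  "strong_ED C N \<longleftrightarrow> (\<exists>K a lam P. strong_ED_with C N K a lam P)"
  unfolding strong_ED_def strong_ED_with_def by blast

lemma strong_ED_with_scaleR:
  assumes ed: "strong_ED_with B N K a lam P" and inv: "\<And>n. invertible (B n)"
    and norms: "\<And>n. is_norm (N n)" and "c > 0" and small: "\<bar>ln c\<bar> < lam"
  shows "strong_ED_with (\<lambda>n. c *\<^sub>R B n) N K (a + \<bar>ln c\<bar>) (lam - \<bar>ln c\<bar>) P"
proof -
  note forward = cocycle_scaleR_forward_bound[OF norms _ \<open>c > 0\<close>]
  note backward = cocycle_scaleR_backward_bound[OF norms _ \<open>c > 0\<close> inv]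
  have rate: "- (lam - \<bar>ln c\<bar>) = - lam + \<bar>ln c\<bar>" by simp
  have "c *\<^sub>R B n ** P n = P (Suc n) ** (c *\<^sub>R B n)" for n
    using ed by (simp add: strong_ED_with_def matrix_scalar_ac scalar_matrix_assoc[symmetric])
  moreover have "0 < lam - \<bar>ln c\<bar>" "lam - \<bar>ln c\<bar> \<le> a + \<bar>ln c\<bar>"
    using ed small by (auto simp: strong_ED_with_def)
  moreover have "N m (cocycle (\<lambda>n. c *\<^sub>R B n) m n *v (P n *v x))
      \<le> K * exp ((- lam + \<bar>ln c\<bar>) * real (m - n)) * N n x"
    "N n (cocycle (\<lambda>n. c *\<^sub>R B n) n m *v ((mat 1 - P m) *v x))
      \<le> K * exp ((- lam + \<bar>ln c\<bar>) * real (m - n)) * N m x"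
    "N m (cocycle (\<lambda>n. c *\<^sub>R B n) m n *v x) \<le> K * exp ((a + \<bar>ln c\<bar>) * real (m - n)) * N n x"
    "N n (cocycle (\<lambda>n. c *\<^sub>R B n) n m *v x) \<le> K * exp ((a + \<bar>ln c\<bar>) * real (m - n)) * N m x"
    if "n \<le> m" for m n x
    using ed that
    by (intro forward[OF that] backward[OF that]; simp add: strong_ED_with_def)+
  ultimately show ?thesis
    using ed unfolding strong_ED_with_def rate by auto
qed

lemma strong_ED_with_stable_bound:
  assumes ed: "strong_ED_with C N K a lam P" and norms: "\<And>n. is_norm (N n)" and "n \<le> m"
  shows "N m (cocycle C m n *v (P n *v v)) \<le> K * N n v"
proof -
  have "N m (cocycle C m n *v (P n *v v)) \<le> K * exp (- lam * real (m - n)) * N n v"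
    using ed \<open>n \<le> m\<close> unfolding strong_ED_with_def by blast
  also have "\<dots> \<le> K * 1 * N n v"
    using ed is_norm_nonneg[OF norms]
    by (intro mult_right_mono mult_left_mono) (auto simp: strong_ED_with_def)
  finally show ?thesis by simp
qed

lemma strong_ED_with_unstable_contraction:
  assumes ed: "strong_ED_with C N K a lam P" and inv: "\<And>n. invertible (C n)"
    and "n \<le> m" and unstable: "P n *v w = 0"
  shows "N n w \<le> K * exp (- lam * real (m - n)) * N m (cocycle C m n *v w)"
proof -
  define y where "y = cocycle C m n *v w"
  have "cocycle C m n ** P n = P m ** cocycle C m n"
    using ed \<open>n \<le> m\<close> by (simp add: cocycle_intertwines strong_ED_with_def)
  then have "P m *v y = 0"
    unfolding y_def using unstable by (metis matrix_vector_mul_assoc matrix_vector_mult_0_right)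
  then have "(mat 1 - P m) *v y = y"
    by (simp add: matrix_vector_mult_diff_rdistrib)
  moreover have "w = cocycle C n m *v y"
    using cocycle_backward_mult_forward[OF \<open>n \<le> m\<close> inv]
    by (simp add: y_def matrix_vector_mul_assoc)
  ultimately have "N n w = N n (cocycle C n m *v ((mat 1 - P m) *v y))"
    by simp
  also have "\<dots> \<le> K * exp (- lam * real (m - n)) * N m y"
    using ed \<open>n \<le> m\<close> unfolding strong_ED_with_def by blast
  finally show ?thesis unfolding y_def .
qed

lemma S_space_rescale:
  assumes norms: "\<And>n. is_norm (N n)" and "\<tau> > 0"
  shows "S_space A N \<tau> n = S_space (\<lambda>k. inverse \<tau> *\<^sub>R A k) N 1 n"
proof -
  have "(\<lambda>m. inverse \<tau> ^ (m - n) * N m (cocycle A m n *v v)) ` {n..}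
      = (\<lambda>m. N m (cocycle (\<lambda>k. inverse \<tau> *\<^sub>R A k) m n *v v)) ` {n..}" for v
    using \<open>\<tau> > 0\<close>
    by (intro image_cong)
      (simp_all add: cocycle_scaleR_forward is_norm_scaleR[OF norms]
        scaleR_matrix_vector_assoc[symmetric])
  then show ?thesis unfolding S_space_def by simp
qed

lemma le_exponential_decay_imp_nonpos:
  fixes x :: real
  assumes "lam > 0" and decay: "\<And>k. x \<le> K * exp (- lam * real k) * R"
  shows "x \<le> 0"
proof -
  have "(\<lambda>k. exp (- lam) ^ k) \<longlonglongrightarrow> 0"
    using \<open>lam > 0\<close> by (intro LIMSEQ_power_zero) simp
  then have "(\<lambda>k. K * exp (- lam * real k) * R) \<longlonglongrightarrow> 0"
    by (intro tendsto_mult_right_zero tendsto_mult_left_zero)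
      (simp add: exp_of_nat_mult[symmetric] mult.commute)
  with decay show ?thesis by (intro LIMSEQ_le_const) auto
qed

lemma strong_ED_with_bounded_orbit_imp_stable:
  assumes ed: "strong_ED_with C N K a lam P" and inv: "\<And>n. invertible (C n)"
    and norms: "\<And>n. is_norm (N n)"
    and bounded: "\<And>m. n \<le> m \<Longrightarrow> N m (cocycle C m n *v v) \<le> R"
  shows "P n *v v = v"
proof -
  define w where "w = v - P n *v v"
  have "P n *v w = 0"
    using ed unfolding w_def strong_ED_with_def
    by (simp add: matrix_vector_mult_diff_distrib matrix_vector_mul_assoc)
  have "N n w \<le> K * exp (- lam * real k) * (R + K * N n v)" for k
  proof -
    let ?C = "cocycle C (n + k) n"
    have "N (n + k) (?C *v w) = N (n + k) (?C *v v - ?C *v (P n *v v))"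
      by (simp add: w_def matrix_vector_mult_diff_distrib)
    also have "\<dots> \<le> N (n + k) (?C *v v) + N (n + k) (?C *v (P n *v v))"
      by (rule is_norm_diff_le[OF norms])
    also have "\<dots> \<le> R + K * N n v"
      by (intro add_mono bounded strong_ED_with_stable_bound[OF ed norms]) simp_all
    finally have orbit: "N (n + k) (?C *v w) \<le> R + K * N n v" .
    have "N n w \<le> K * exp (- lam * real k) * N (n + k) (?C *v w)"
      using strong_ED_with_unstable_contraction[OF ed inv _ \<open>P n *v w = 0\<close>, of "n + k"] by simp
    also have "\<dots> \<le> K * exp (- lam * real k) * (R + K * N n v)"
      using ed orbit by (intro mult_left_mono) (simp_all add: strong_ED_with_def)
    finally show ?thesis .
  qed
  moreover have "lam > 0" using ed by (simp add: strong_ED_with_def)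
  ultimately have "N n w \<le> 0" by (intro le_exponential_decay_imp_nonpos)
  then have "w = 0"
    using is_norm_nonneg[OF norms, of n w] is_norm_eq_zero[OF norms, of n w] by linarith
  then show ?thesis unfolding w_def by simp
qed

lemma S_space_one_eq_fixed_points:
  assumes ed: "strong_ED_with C N K a lam P" and inv: "\<And>n. invertible (C n)"
    and norms: "\<And>n. is_norm (N n)"
  shows "S_space C N 1 n = {v. P n *v v = v}"
proof (intro set_eqI iffI)
  fix v assume "v \<in> {v. P n *v v = v}"
  then have "N m (cocycle C m n *v v) \<le> K * N n v" if "n \<le> m" for m
    using strong_ED_with_stable_bound[OF ed norms that, of v] by simp
  then have "bdd_above ((\<lambda>m. N m (cocycle C m n *v v)) ` {n..})"
    by (intro bdd_aboveI2[where M = "K * N n v"]) simp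
  then show "v \<in> S_space C N 1 n" unfolding S_space_def by simp
next
  fix v assume "v \<in> S_space C N 1 n"
  then obtain R where "\<And>m. n \<le> m \<Longrightarrow> N m (cocycle C m n *v v) \<le> R"
    unfolding S_space_def bdd_above_def by auto
  then show "v \<in> {v. P n *v v = v}"
    using strong_ED_with_bounded_orbit_imp_stable[OF ed inv norms] by blast
qed

lemma strong_ED_with_rescale:
  assumes ed: "strong_ED_with (\<lambda>n. inverse \<tau> *\<^sub>R A n) N K a lam P"
    and inv: "\<And>n. invertible (A n)" and norms: "\<And>n. is_norm (N n)"
    and "\<tau> > 0" and "\<tau>' > 0" and close: "\<bar>ln \<tau>' - ln \<tau>\<bar> < lam"
  shows "strong_ED_with (\<lambda>n. inverse \<tau>' *\<^sub>R A n) N K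
           (a + \<bar>ln \<tau>' - ln \<tau>\<bar>) (lam - \<bar>ln \<tau>' - ln \<tau>\<bar>) P"
proof -
  define c where "c = \<tau> / \<tau>'"
  have "c > 0" using assms by (simp add: c_def)
  have ln_c: "\<bar>ln c\<bar> = \<bar>ln \<tau>' - ln \<tau>\<bar>"
    using assms by (simp add: c_def ln_div)
  have rescaled: "(\<lambda>n. c *\<^sub>R (inverse \<tau> *\<^sub>R A n)) = (\<lambda>n. inverse \<tau>' *\<^sub>R A n)"
    using \<open>\<tau> > 0\<close> by (simp add: c_def field_simps)
  have "\<And>n. invertible (inverse \<tau> *\<^sub>R A n)"
    using inv \<open>\<tau> > 0\<close> by (simp add: scalar_invertible)
  from strong_ED_with_scaleR[OF ed this norms \<open>c > 0\<close>] show ?thesis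
    using close unfolding ln_c rescaled by blast
qed

lemma ED_spectrum_complement_interval:
  assumes inv: "\<And>n. invertible (A n)" and norms: "\<And>n. is_norm (N n)"
    and "\<tau> > 0" and "\<tau> \<notin> ED_spectrum A N"
  shows "\<exists>l u. 0 < l \<and> l < \<tau> \<and> \<tau> < u \<and>
           (\<forall>\<tau>' \<in> {l<..<u}. \<tau>' \<notin> ED_spectrum A N \<and> (\<forall>n. S_space A N \<tau> n = S_space A N \<tau>' n))"
proof -
  obtain K a lam P where ed: "strong_ED_with (\<lambda>n. inverse \<tau> *\<^sub>R A n) N K a lam P"
    using assms unfolding ED_spectrum_def strong_ED_iff_ex_strong_ED_with by auto
  have "lam > 0" using ed by (simp add: strong_ED_with_def)
  have inv_scaled: "\<And>t n. t > 0 \<Longrightarrow> invertible (inverse t *\<^sub>R A n)"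
    using inv by (simp add: scalar_invertible)
  have bounds: "0 < \<tau> * exp (- lam)" "\<tau> * exp (- lam) < \<tau>" "\<tau> < \<tau> * exp lam"
    using \<open>\<tau> > 0\<close> \<open>lam > 0\<close> by auto
  have near: "\<tau>' \<notin> ED_spectrum A N \<and> (\<forall>n. S_space A N \<tau> n = S_space A N \<tau>' n)"
    if "\<tau>' \<in> {\<tau> * exp (- lam)<..<\<tau> * exp lam}" for \<tau>'
  proof -
    have \<tau>': "\<tau> * exp (- lam) < \<tau>'" "\<tau>' < \<tau> * exp lam" using that by simp_all
    have "\<tau>' > 0" using \<tau>' bounds by linarith
    have "ln (\<tau> * exp (- lam)) < ln \<tau>'" "ln \<tau>' < ln (\<tau> * exp lam)"
      using \<tau>' bounds \<open>\<tau>' > 0\<close> by simp_all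
    then have "\<bar>ln \<tau>' - ln \<tau>\<bar> < lam"
      using \<open>\<tau> > 0\<close> by (simp add: ln_mult abs_less_iff)
    from strong_ED_with_rescale[OF ed inv norms \<open>\<tau> > 0\<close> \<open>\<tau>' > 0\<close> this]
    have ed': "strong_ED_with (\<lambda>n. inverse \<tau>' *\<^sub>R A n) N K
        (a + \<bar>ln \<tau>' - ln \<tau>\<bar>) (lam - \<bar>ln \<tau>' - ln \<tau>\<bar>) P" .
    then have "\<tau>' \<notin> ED_spectrum A N"
      unfolding ED_spectrum_def strong_ED_iff_ex_strong_ED_with by blast
    moreover have "S_space A N \<tau> n = S_space A N \<tau>' n" for n
      unfolding S_space_rescale[OF norms \<open>\<tau> > 0\<close>] S_space_rescale[OF norms \<open>\<tau>' > 0\<close>]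
        S_space_one_eq_fixed_points[OF ed inv_scaled[OF \<open>\<tau> > 0\<close>] norms]
        S_space_one_eq_fixed_points[OF ed' inv_scaled[OF \<open>\<tau>' > 0\<close>] norms] ..
    ultimately show ?thesis by blast
  qed
  with bounds show ?thesis by blast
qed

lemma closedin_if_complement_has_interval_neighbourhoods:
  fixes S T :: "real set"
  assumes "T \<subseteq> S"
    and intervals: "\<And>x. x \<in> S - T \<Longrightarrow> \<exists>l u. l < x \<and> x < u \<and> {l<..<u} \<subseteq> S - T"
  shows "closedin (top_of_set S) T"
proof -
  have "open (S - T)"
  proof (rule open_subopen[THEN iffD2], intro ballI)
    fix x assume "x \<in> S - T"
    with intervals obtain l u where "l < x" "x < u" "{l<..<u} \<subseteq> S - T" by blast
    then show "\<exists>U. open U \<and> x \<in> U \<and> U \<subseteq> S - T"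
      by (intro exI[of _ "{l<..<u}"]) simp
  qed
  then show ?thesis
    unfolding closedin_def using assms(1) by (simp add: open_subset)
qed

theorem lemma7p3:
  fixes A :: "nat \<Rightarrow> real^'d^'d" and N :: "nat \<Rightarrow> real^'d \<Rightarrow> real"
  assumes inv: "\<And>n. invertible (A n)"
    and norms: "\<And>n. is_norm (N n)"
    and K: "K > 0" and a: "a > 0"
    and bd1: "\<And>m n x. n \<le> m \<Longrightarrow> N m (cocycle A m n *v x) \<le> K * exp (a * real (m - n)) * N n x"
    and bd2: "\<And>m n x. n \<le> m \<Longrightarrow> N n (cocycle A n m *v x) \<le> K * exp (a * real (m - n)) * N m x"
  shows "closedin (top_of_set {0<..}) (ED_spectrum A N) \<and>
         (\<forall>r \<in> {0<..} - ED_spectrum A N. \<exists>l u. 0 < l \<and> l < r \<and> r < u \<and>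
            (\<forall>r' \<in> {l<..<u}. \<forall>n. S_space A N r n = S_space A N r' n))"
proof -
  have intervals: "\<exists>l u. 0 < l \<and> l < r \<and> r < u \<and>
      (\<forall>r' \<in> {l<..<u}. r' \<notin> ED_spectrum A N \<and> (\<forall>n. S_space A N r n = S_space A N r' n))"
    if "r \<in> {0<..} - ED_spectrum A N" for r
    using that by (intro ED_spectrum_complement_interval[OF inv norms]) simp_all
  have "closedin (top_of_set {0<..}) (ED_spectrum A N)"
  proof (rule closedin_if_complement_has_interval_neighbourhoods)
    show "ED_spectrum A N \<subseteq> {0<..}" by (auto simp: ED_spectrum_def)
    fix r assume "r \<in> {0<..} - ED_spectrum A N"
    from intervals[OF this] obtain l u where "0 < l" "l < r" "r < u"
      and "\<forall>r' \<in> {l<..<u}. r' \<notin> ED_spectrum A N \<and> (\<forall>n. S_space A N r n = S_space A N r' n)"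
      by blast
    then show "\<exists>l u. l < r \<and> r < u \<and> {l<..<u} \<subseteq> {0<..} - ED_spectrum A N"
      by (intro exI[of _ l] exI[of _ u] conjI) auto
  qed
  moreover have "\<exists>l u. 0 < l \<and> l < r \<and> r < u \<and>
      (\<forall>r' \<in> {l<..<u}. \<forall>n. S_space A N r n = S_space A N r' n)"
    if "r \<in> {0<..} - ED_spectrum A N" for r
    using intervals[OF that] by (elim exE) (intro exI conjI; auto)
  ultimately show ?thesis by blast
qed

end
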